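(* Let $\mathcal{A}$ be a finite-dimensional bialgebra over $\mathbb{C}$ with multiplication written by juxtaposition, unit $1_{\mathcal{A}}$, comultiplication $\Delta$ and counit $\epsilon$. Let $\rho:\mathcal{A}\to M_{d_\rho}(\mathbb{C})$ be a $d_\rho$-dimensional representation with matrix entries $\rho_{ab}(x)$, and let $(v_{ij})_{1\le i,j\le d_v}$ be a $d_v$-dimensional corepresentation of $\mathcal{A}$. Fix a basis $B(\mathcal{A})$ of $\mathcal{A}$ with dual basis $\{\delta_x\}_{x\in B(\mathcal{A})}$ of $\mathcal{A}^*$, $\delta_x(y)=\delta_{x,y}$. For $a,b\in\{1,\dots,d_\rho\}$, $i,j\in\{1,\dots,d_v\}$, $x,y\in B(\mathcal{A})$ define $$U^{ab}_{ij}=\rho_{ab}(v_{ij}),\quad R^{yx}_{ab}=(\delta_y\otimes\rho_{ab})(\Delta(x)),\quad V^{yx}_{ij}=\delta_y(x\,v_{ij}),\quad u_x=\delta_x(1_{\mathcal{A}}),\quad e_x=\epsilon(x).$$ Then for all $a,b,i,j,x,y$: (1) $\sum_{z\in B(\mathcal{A})}R^{yz}_{ab}V^{zx}_{ij}=\sum_{z\in B(\mathcal{A})}\sum_{k=1}^{d_v}\sum_{c=1}^{d_\rho}V^{yz}_{ik}\,R^{zx}_{ac}\,U^{cb}_{kj}$; (2) $\sum_{y\in B(\mathcal{A})}e_y V^{yx}_{ij}=\delta_{ij}\,e_x$; (3) $\sum_{x\in B(\mathcal{A})}R^{yx}_{ab}u_x=\delta_{ab}\,u_y$; (4) $\sum_{x\in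 B(\mathcal{A})}e_xu_x=1$.
   Context: A bialgebra is a unital associative algebra and a coassociative counital coalgebra such that $\Delta(xy)=\Delta(x)\Delta(y)$, $\Delta(1)=1\otimes1$ and $\epsilon(xy)=\epsilon(x)\epsilon(y)$. A $d$-dimensional representation is a linear map $\rho:\mathcal{A}\to M_d(\mathbb{C})$ with $\rho(1)=\mathbb{1}$ and $\rho(xy)=\rho(x)\rho(y)$. A $d$-dimensional corepresentation is a $d\times d$ matrix $(v_{ij})$ of elements of $\mathcal{A}$ with $\Delta(v_{ij})=\sum_{k=1}^d v_{ik}\otimes v_{kj}$ and $\epsilon(v_{ij})=\delta_{ij}$. *)

theory Defs
  imports Complex_Main
begin

text \<open>Elements of the algebraic tensor product A (x) A are represented as finite sums of simple
  tensors, i.e. lists of pairs [(a1,b1),...] standing for a1 (x) b1 + ... ; two such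
  representations denote the same tensor iff they agree on every bilinear form
  (for finite-dimensional A, A (x) A is the dual of the space of bilinear forms on A x A).\<close>

definition tpair :: "('a \<Rightarrow> 'a \<Rightarrow> complex) \<Rightarrow> ('a \<times> 'a) list \<Rightarrow> complex" where
  "tpair \<phi> t = sum_list (map (\<lambda>(p, q). \<phi> p q) t)"

definition bilinear_form :: "(complex \<Rightarrow> 'a::ab_group_add \<Rightarrow> 'a) \<Rightarrow> ('a \<Rightarrow> 'a \<Rightarrow> complex) \<Rightarrow> bool" where
  "bilinear_form sc \<phi> \<longleftrightarrow>
     (\<forall>b. Vector_Spaces.linear sc (*) (\<lambda>a. \<phi> a b)) \<and> (\<forall>a. Vector_Spaces.linear sc (*) (\<phi> a))"

definition trilinear_form :: "(complex \<Rightarrow> 'a::ab_group_add \<Rightarrow> 'a) \<Rightarrow> ('a \<Rightarrow> 'a \<Rightarrow> 'a \<Rightarrow> complex) \<Rightarrow> bool" where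
  "trilinear_form sc \<psi> \<longleftrightarrow>
     (\<forall>b c. Vector_Spaces.linear sc (*) (\<lambda>a. \<psi> a b c)) \<and>
     (\<forall>a c. Vector_Spaces.linear sc (*) (\<lambda>b. \<psi> a b c)) \<and>
     (\<forall>a b. Vector_Spaces.linear sc (*) (\<lambda>c. \<psi> a b c))"

definition complex_bialgebra ::
  "(complex \<Rightarrow> 'a::ring_1 \<Rightarrow> 'a) \<Rightarrow> ('a \<Rightarrow> ('a \<times> 'a) list) \<Rightarrow> ('a \<Rightarrow> complex) \<Rightarrow> bool" where
  "complex_bialgebra sc \<Delta> \<epsilon> \<longleftrightarrow>
     vector_space sc \<and>
     (\<forall>c x y. sc c (x * y) = sc c x * y \<and> sc c (x * y) = x * sc c y) \<and>
     (\<forall>\<phi>. bilinear_form sc \<phi> \<longrightarrow> Vector_Spaces.linear sc (*) (\<lambda>x. tpair \<phi> (\<Delta> x))) \<and>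
     (\<forall>\<psi> x. trilinear_form sc \<psi> \<longrightarrow>
        sum_list (map (\<lambda>(a, b). tpair (\<lambda>p q. \<psi> p q b) (\<Delta> a)) (\<Delta> x)) =
        sum_list (map (\<lambda>(a, b). tpair (\<lambda>p q. \<psi> a p q) (\<Delta> b)) (\<Delta> x))) \<and>
     Vector_Spaces.linear sc (*) \<epsilon> \<and>
     (\<forall>x. sum_list (map (\<lambda>(a, b). sc (\<epsilon> a) b) (\<Delta> x)) = x) \<and>
     (\<forall>x. sum_list (map (\<lambda>(a, b). sc (\<epsilon> b) a) (\<Delta> x)) = x) \<and>
     (\<forall>\<phi> x y. bilinear_form sc \<phi> \<longrightarrow>
        tpair \<phi> (\<Delta> (x * y)) =
        sum_list (map (\<lambda>(a, b). sum_list (map (\<lambda>(c, d). \<phi> (a * c) (b * d)) (\<Delta> y))) (\<Delta> x))) \<and>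
     (\<forall>\<phi>. bilinear_form sc \<phi> \<longrightarrow> tpair \<phi> (\<Delta> 1) = \<phi> 1 1) \<and>
     (\<forall>x y. \<epsilon> (x * y) = \<epsilon> x * \<epsilon> y)"

definition complex_rep ::
  "(complex \<Rightarrow> 'a::ring_1 \<Rightarrow> 'a) \<Rightarrow> nat \<Rightarrow> ('a \<Rightarrow> nat \<Rightarrow> nat \<Rightarrow> complex) \<Rightarrow> bool" where
  "complex_rep sc d \<rho> \<longleftrightarrow>
     (\<forall>a\<in>{1..d}. \<forall>b\<in>{1..d}.
        Vector_Spaces.linear sc (*) (\<lambda>x. \<rho> x a b) \<and>
        \<rho> 1 a b = (if a = b then 1 else 0) \<and>
        (\<forall>x y. \<rho> (x * y) a b = (\<Sum>c = 1..d. \<rho> x a c * \<rho> y c b)))"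

definition complex_corep ::
  "(complex \<Rightarrow> 'a::ring_1 \<Rightarrow> 'a) \<Rightarrow> ('a \<Rightarrow> ('a \<times> 'a) list) \<Rightarrow> ('a \<Rightarrow> complex) \<Rightarrow>
   nat \<Rightarrow> (nat \<Rightarrow> nat \<Rightarrow> 'a) \<Rightarrow> bool" where
  "complex_corep sc \<Delta> \<epsilon> d v \<longleftrightarrow>
     (\<forall>i\<in>{1..d}. \<forall>j\<in>{1..d}.
        (\<forall>\<phi>. bilinear_form sc \<phi> \<longrightarrow>
           tpair \<phi> (\<Delta> (v i j)) = (\<Sum>k = 1..d. \<phi> (v i k) (v k j))) \<and>
        \<epsilon> (v i j) = (if i = j then 1 else 0))"

definition finite_basis :: "(complex \<Rightarrow> 'a::ab_group_add \<Rightarrow> 'a) \<Rightarrow> 'a set \<Rightarrow> bool" where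
  "finite_basis sc B \<longleftrightarrow> finite B \<and> \<not> module.dependent sc B \<and> module.span sc B = UNIV"

text \<open>Dual basis functional: dual_basis sc B y w = delta_y(w), the y-coordinate of w.\<close>

definition dual_basis :: "(complex \<Rightarrow> 'a::ab_group_add \<Rightarrow> 'a) \<Rightarrow> 'a set \<Rightarrow> 'a \<Rightarrow> 'a \<Rightarrow> complex" where
  "dual_basis sc B y w = module.representation sc B w y"

end

theory Submission imports Defs begin

text \<open>Each identity is the coordinate form of a bialgebra axiom, obtained by pairing with
  a (bi)linear form and expanding along the basis, f w = (\<Sum>z\<in>B. f z * \<delta>_z w) for linear f.
  The first one reads off \<Delta>(x v_ij) = \<Delta>(x) \<Delta>(v_ij) = \<Sum>_k \<Delta>(x) (v_ik \<otimes> v_kj) against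
  \<delta>_y \<otimes> \<rho>_ab and then splits \<rho>(q v_kj) = \<rho>(q) \<rho>(v_kj); the other three come from
  multiplicativity of \<epsilon>, \<Delta>(1) = 1 \<otimes> 1 and \<epsilon>(1) = 1.\<close>

lemma tpair_sum: "tpair (\<lambda>p q. \<Sum>z\<in>S. \<phi> z p q) t = (\<Sum>z\<in>S. tpair (\<phi> z) t)"
  by (induction t) (auto simp: tpair_def sum.distrib)

lemma tpair_mult_left: "tpair (\<lambda>p q. c * \<phi> p q) t = c * tpair \<phi> t"
  by (induction t) (auto simp: tpair_def algebra_simps)

lemma tpair_mult_right: "tpair (\<lambda>p q. \<phi> p q * c) t = tpair \<phi> t * c"
  by (induction t) (auto simp: tpair_def algebra_simps)

lemma bilinear_form_mult:
  assumes "Vector_Spaces.linear sc (*) f" and "Vector_Spaces.linear sc (*) g"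
  shows "bilinear_form sc (\<lambda>p q. f p * g q)"
  using assms unfolding bilinear_form_def Vector_Spaces.linear_iff
  by (simp add: algebra_simps)

locale fin_dim_bialgebra =
  fixes sc :: "complex \<Rightarrow> 'a::ring_1 \<Rightarrow> 'a"
    and \<Delta> :: "'a \<Rightarrow> ('a \<times> 'a) list" and \<epsilon> :: "'a \<Rightarrow> complex"
    and B :: "'a set"
  assumes bialgebra: "complex_bialgebra sc \<Delta> \<epsilon>"
    and basis: "finite_basis sc B"
begin

lemma vector_space: "vector_space sc"
  using bialgebra by (simp add: complex_bialgebra_def)

lemma linear_tpair_comult:
  "bilinear_form sc \<phi> \<Longrightarrow> Vector_Spaces.linear sc (*) (\<lambda>x. tpair \<phi> (\<Delta> x))"
  using bialgebra by (simp add: complex_bialgebra_def)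

lemma tpair_comult_mult:
  "bilinear_form sc \<phi> \<Longrightarrow>
     tpair \<phi> (\<Delta> (x * y)) = tpair (\<lambda>p q. tpair (\<lambda>r s. \<phi> (p * r) (q * s)) (\<Delta> y)) (\<Delta> x)"
  using bialgebra by (simp add: complex_bialgebra_def tpair_def)

lemma tpair_comult_one: "bilinear_form sc \<phi> \<Longrightarrow> tpair \<phi> (\<Delta> 1) = \<phi> 1 1"
  using bialgebra by (simp add: complex_bialgebra_def)

lemma linear_counit: "Vector_Spaces.linear sc (*) \<epsilon>"
  using bialgebra by (simp add: complex_bialgebra_def)

lemma counit_mult: "\<epsilon> (x * y) = \<epsilon> x * \<epsilon> y"
  using bialgebra by (simp add: complex_bialgebra_def)

lemma counit_one: "\<epsilon> 1 = 1"
proof (rule ccontr)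
  interpret vector_space sc by (rule vector_space)
  assume "\<epsilon> 1 \<noteq> 1"
  then have "\<epsilon> 1 = 0"
    using counit_mult[of 1 1] by simp
  then have "\<epsilon> x = 0" for x
    using counit_mult[of x 1] by simp
  moreover have "sum_list (map (\<lambda>(a, b). sc (\<epsilon> a) b) (\<Delta> 1)) = 1"
    using bialgebra by (simp add: complex_bialgebra_def)
  moreover have "sum_list (map (\<lambda>(a, b). sc 0 b) t) = 0" for t :: "('a \<times> 'a) list"
    by (induction t) auto
  ultimately show False
    by simp
qed

lemma linear_mult_right:
  assumes "Vector_Spaces.linear sc (*) f"
  shows "Vector_Spaces.linear sc (*) (\<lambda>p. f (p * w))"
proof -
  have "sc c p * w = sc c (p * w)" for c p
    using bialgebra by (simp add: complex_bialgebra_def)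
  then show ?thesis
    using assms unfolding Vector_Spaces.linear_iff by (simp add: distrib_right)
qed

lemma linear_mult_left:
  assumes "Vector_Spaces.linear sc (*) f"
  shows "Vector_Spaces.linear sc (*) (\<lambda>p. f (w * p))"
proof -
  have "w * sc c p = sc c (w * p)" for c p
    using bialgebra by (metis complex_bialgebra_def)
  then show ?thesis
    using assms unfolding Vector_Spaces.linear_iff by (simp add: distrib_left)
qed

lemma linear_dual_basis: "Vector_Spaces.linear sc (*) (dual_basis sc B y)"
proof -
  interpret vector_space sc by (rule vector_space)
  show ?thesis
    using basis linear_representation unfolding finite_basis_def dual_basis_def by auto
qed

lemma sum_linear_dual_basis:
  assumes "Vector_Spaces.linear sc (*) f"
  shows "(\<Sum>z\<in>B. f z * dual_basis sc B z w) = f w"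
proof -
  interpret vector_space sc by (rule vector_space)
  interpret f: Vector_Spaces.linear sc "(*)" f by fact
  have "w = (\<Sum>z\<in>B. sc (dual_basis sc B z w) z)"
    using basis unfolding finite_basis_def dual_basis_def
    by (intro sum_representation_eq[symmetric]) auto
  then have "f w = (\<Sum>z\<in>B. f (sc (dual_basis sc B z w) z))"
    by (metis f.sum)
  then show ?thesis
    by (simp add: f.scale mult.commute)
qed

lemma tpair_comult_mult_corep:
  assumes corep: "complex_corep sc \<Delta> \<epsilon> d v" and i: "i \<in> {1..d}" and j: "j \<in> {1..d}"
    and \<phi>: "bilinear_form sc \<phi>"
  shows "tpair \<phi> (\<Delta> (x * v i j)) = (\<Sum>k = 1..d. tpair (\<lambda>p q. \<phi> (p * v i k) (q * v k j)) (\<Delta> x))"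
proof -
  have "tpair (\<lambda>r s. \<phi> (p * r) (q * s)) (\<Delta> (v i j)) = (\<Sum>k = 1..d. \<phi> (p * v i k) (q * v k j))"
    for p q
  proof -
    have "bilinear_form sc (\<lambda>r s. \<phi> (p * r) (q * s))"
      using \<phi> linear_mult_left[of "\<lambda>r. \<phi> r _" p] linear_mult_left[of "\<phi> _" q]
      unfolding bilinear_form_def by simp
    then show ?thesis
      using corep i j by (simp add: complex_corep_def)
  qed
  then show ?thesis
    by (simp add: tpair_comult_mult[OF \<phi>] tpair_sum)
qed

lemma counit_exchange:
  assumes "complex_corep sc \<Delta> \<epsilon> d v" and "i \<in> {1..d}" "j \<in> {1..d}"
  shows "(\<Sum>y\<in>B. \<epsilon> y * dual_basis sc B y (x * v i j)) = (if i = j then 1 else 0) * \<epsilon> x"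
  using assms by (simp add: sum_linear_dual_basis[OF linear_counit] counit_mult complex_corep_def)

lemma counit_unit_pairing: "(\<Sum>x\<in>B. \<epsilon> x * dual_basis sc B x 1) = 1"
  by (simp add: sum_linear_dual_basis[OF linear_counit] counit_one)

context
  fixes \<rho> :: "'a \<Rightarrow> nat \<Rightarrow> nat \<Rightarrow> complex" and d :: nat
  assumes rep: "complex_rep sc d \<rho>"
begin

lemma bilinear_form_dual_basis_rep:
  assumes "a \<in> {1..d}" "b \<in> {1..d}"
  shows "bilinear_form sc (\<lambda>p q. dual_basis sc B y p * \<rho> q a b)"
  using rep assms by (intro bilinear_form_mult linear_dual_basis) (simp add: complex_rep_def)

lemma unit_exchange:
  assumes "a \<in> {1..d}" "b \<in> {1..d}"
  shows "(\<Sum>x\<in>B. tpair (\<lambda>p q. dual_basis sc B y p * \<rho> q a b) (\<Delta> x) * dual_basis sc B x 1) =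
    (if a = b then 1 else 0) * dual_basis sc B y 1"
proof -
  note \<phi> = bilinear_form_dual_basis_rep[OF assms]
  have "\<rho> 1 a b = (if a = b then 1 else 0)"
    using rep assms by (simp add: complex_rep_def)
  then show ?thesis
    unfolding sum_linear_dual_basis[OF linear_tpair_comult[OF \<phi>]] tpair_comult_one[OF \<phi>]
    by simp
qed

lemma rep_corep_exchange:
  assumes corep: "complex_corep sc \<Delta> \<epsilon> dv v"
    and a: "a \<in> {1..d}" and b: "b \<in> {1..d}" and i: "i \<in> {1..dv}" and j: "j \<in> {1..dv}"
  defines "R \<equiv> \<lambda>y x a b. tpair (\<lambda>p q. dual_basis sc B y p * \<rho> q a b) (\<Delta> x)"
    and "V \<equiv> \<lambda>y x i j. dual_basis sc B y (x * v i j)"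
  shows "(\<Sum>z\<in>B. R y z a b * V z x i j) =
    (\<Sum>z\<in>B. \<Sum>k = 1..dv. \<Sum>c = 1..d. V y z i k * R z x a c * \<rho> (v k j) c b)"
proof -
  let ?\<delta> = "dual_basis sc B"
  have factor: "?\<delta> y (p * v i k) * \<rho> (q * v k j) a b =
      (\<Sum>c = 1..d. \<Sum>z\<in>B. V y z i k * (?\<delta> z p * \<rho> q a c) * \<rho> (v k j) c b)" for k p q
  proof -
    have "?\<delta> y (p * v i k) = (\<Sum>z\<in>B. V y z i k * ?\<delta> z p)"
      unfolding V_def by (rule sum_linear_dual_basis[OF linear_mult_right[OF linear_dual_basis], symmetric])
    moreover have "\<rho> (q * v k j) a b = (\<Sum>c = 1..d. \<rho> q a c * \<rho> (v k j) c b)"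
      using rep a b by (simp add: complex_rep_def)
    ultimately show ?thesis
      by (simp add: sum_product sum.swap[of _ B] mult_ac)
  qed
  have "(\<Sum>z\<in>B. R y z a b * V z x i j) = tpair (\<lambda>p q. ?\<delta> y p * \<rho> q a b) (\<Delta> (x * v i j))"
    unfolding R_def V_def
    by (rule sum_linear_dual_basis[OF linear_tpair_comult[OF bilinear_form_dual_basis_rep[OF a b]]])
  also have "\<dots> = (\<Sum>k = 1..dv. tpair (\<lambda>p q. ?\<delta> y (p * v i k) * \<rho> (q * v k j) a b) (\<Delta> x))"
    by (rule tpair_comult_mult_corep[OF corep i j bilinear_form_dual_basis_rep[OF a b]])
  also have "\<dots> = (\<Sum>k = 1..dv. \<Sum>c = 1..d. \<Sum>z\<in>B. V y z i k * R z x a c * \<rho> (v k j) c b)"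
    unfolding R_def by (simp only: factor tpair_sum tpair_mult_left tpair_mult_right)
  also have "\<dots> = (\<Sum>z\<in>B. \<Sum>k = 1..dv. \<Sum>c = 1..d. V y z i k * R z x a c * \<rho> (v k j) c b)"
    by (subst sum.swap) (simp only: sum.swap[of _ "{1..d}"])
  finally show ?thesis .
qed

end

end

theorem theorem1:
  fixes sc :: "complex \<Rightarrow> 'a::ring_1 \<Rightarrow> 'a"
    and \<Delta> :: "'a \<Rightarrow> ('a \<times> 'a) list" and \<epsilon> :: "'a \<Rightarrow> complex"
    and \<rho> :: "'a \<Rightarrow> nat \<Rightarrow> nat \<Rightarrow> complex" and d\<rho> :: nat
    and v :: "nat \<Rightarrow> nat \<Rightarrow> 'a" and dv :: nat
    and B :: "'a set"
  assumes bialg: "complex_bialgebra sc \<Delta> \<epsilon>"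
    and rep: "complex_rep sc d\<rho> \<rho>"
    and corep: "complex_corep sc \<Delta> \<epsilon> dv v"
    and basis: "finite_basis sc B"
  defines "U \<equiv> \<lambda>a b i j. \<rho> (v i j) a b"
    and "R \<equiv> \<lambda>y x a b. tpair (\<lambda>p q. dual_basis sc B y p * \<rho> q a b) (\<Delta> x)"
    and "V \<equiv> \<lambda>y x i j. dual_basis sc B y (x * v i j)"
    and "u \<equiv> \<lambda>x. dual_basis sc B x 1"
    and "e \<equiv> \<lambda>x. \<epsilon> x"
  shows
    "(\<forall>a\<in>{1..d\<rho>}. \<forall>b\<in>{1..d\<rho>}. \<forall>i\<in>{1..dv}. \<forall>j\<in>{1..dv}. \<forall>x\<in>B. \<forall>y\<in>B.
        (\<Sum>z\<in>B. R y z a b * V z x i j) =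
        (\<Sum>z\<in>B. \<Sum>k = 1..dv. \<Sum>c = 1..d\<rho>. V y z i k * R z x a c * U c b k j))
   \<and> (\<forall>i\<in>{1..dv}. \<forall>j\<in>{1..dv}. \<forall>x\<in>B.
        (\<Sum>y\<in>B. e y * V y x i j) = (if i = j then 1 else 0) * e x)
   \<and> (\<forall>a\<in>{1..d\<rho>}. \<forall>b\<in>{1..d\<rho>}. \<forall>y\<in>B.
        (\<Sum>x\<in>B. R y x a b * u x) = (if a = b then 1 else 0) * u y)
   \<and> (\<Sum>x\<in>B. e x * u x) = 1"
proof -
  interpret fin_dim_bialgebra sc \<Delta> \<epsilon> B
    using bialg basis by unfold_locales
  show ?thesis
    unfolding U_def R_def V_def u_def e_def
    using rep_corep_exchange[OF rep corep] counit_exchange[OF corep] unit_exchange[OF rep]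
      counit_unit_pairing
    by blast
qed

end
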